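(* (i) If $N=2$, the infeasible SINR region $\Upsilon^c=\mathbb R_+^2\setminus\Upsilon$ is convex; explicitly, $\Upsilon=\{(\mu_1,\mu_2)\in\mathbb R_+^2:\mu_1\mu_2<\frac{g_{r_1^{k_1^*},t_1}}{g_{r_1^{k_1^*},t_2}}\cdot\frac{g_{r_2^{k_2^*},t_2}}{g_{r_2^{k_2^*},t_1}}\}$ where $k_i^*\in\arg\max_{k\in\mathcal K_i}g_{r_i^{k},t_j}/g_{r_i^{k},t_i}$ ($j\neq i$), assuming all cross gains are positive. (ii) For $N\geq 3$ this need not hold: for the system with $N=3$, $K_1=K_2=K_3=2$ and gains $(g_{r,t_1},g_{r,t_2},g_{r,t_3})$ equal to $(1,0.5,0.1)$ for $R_1^1$, $(1,0.1,0.5)$ for $R_1^2$, $(0.5,1,0.1)$ for $R_2^1$, $(0.1,1,0.5)$ for $R_2^2$, $(0.5,0.1,1)$ for $R_3^1$, $(0.1,0.5,1)$ for $R_3^2$, the set $\Upsilon^c$ is not convex.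
   Context: Multicast system: $N$ transmitters $T_1,\dots,T_N$; transmitter $T_i$ has $K_i\geq1$ receivers $R_i^{k}$, $k\in\mathcal K_i=\{1,\dots,K_i\}$. Channel gains $g_{r_i^{k},t_j}\geq 0$ (from $T_j$ to $R_i^k$) with $g_{r_i^{k},t_i}>0$; noise variance $\sigma^2>0$. For $\mathbf p\geq\mathbf 0$: $\gamma_i^{k}(\mathbf p)=\frac{g_{r_i^{k},t_i}p_i}{\sum_{j\neq i}g_{r_i^{k},t_j}p_j+\sigma^2}$, $\gamma_i(\mathbf p)=\min_{k\in\mathcal K_i}\gamma_i^k(\mathbf p)$, $\Gamma(\mathbf p)=(\gamma_1(\mathbf p),\dots,\gamma_N(\mathbf p))$. The feasible SINR region (no power constraint) is $\Upsilon=\{\Gamma(\mathbf p):\mathbf p\in\mathbb R^N,\mathbf p\geq\mathbf 0\}\subseteq\mathbb R_+^N$, and $\Upsilon^c=\mathbb R_+^N\setminus\Upsilon$ is the infeasible SINR region. *)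

theory Defs
  imports "HOL-Analysis.Analysis"
begin

(* Transmitters are indexed by a finite type 'n (so N = CARD('n));
   receivers of transmitter i are indexed by k in {1..K i};
   g i k j = gain from transmitter T_j to receiver R_i^k;  s = noise variance. *)

definition sinr_k :: "('n::finite \<Rightarrow> nat \<Rightarrow> 'n \<Rightarrow> real) \<Rightarrow> real \<Rightarrow> real^'n \<Rightarrow> 'n \<Rightarrow> nat \<Rightarrow> real" where
  "sinr_k g s p i k = g i k i * p$i / ((\<Sum>j\<in>UNIV-{i}. g i k j * p$j) + s)"

definition sinr :: "('n::finite \<Rightarrow> nat) \<Rightarrow> ('n \<Rightarrow> nat \<Rightarrow> 'n \<Rightarrow> real) \<Rightarrow> real \<Rightarrow> real^'n \<Rightarrow> 'n \<Rightarrow> real" where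
  "sinr K g s p i = Min ((\<lambda>k. sinr_k g s p i k) ` {1..K i})"

definition Gamma :: "('n::finite \<Rightarrow> nat) \<Rightarrow> ('n \<Rightarrow> nat \<Rightarrow> 'n \<Rightarrow> real) \<Rightarrow> real \<Rightarrow> real^'n \<Rightarrow> real^'n" where
  "Gamma K g s p = (\<chi> i. sinr K g s p i)"

definition nonneg_orthant :: "(real^'n::finite) set" where
  "nonneg_orthant = {\<mu>. \<forall>i. 0 \<le> \<mu>$i}"

definition feasible_region :: "('n::finite \<Rightarrow> nat) \<Rightarrow> ('n \<Rightarrow> nat \<Rightarrow> 'n \<Rightarrow> real) \<Rightarrow> real \<Rightarrow> (real^'n) set" where
  "feasible_region K g s = Gamma K g s ` nonneg_orthant"

definition infeasible_region :: "('n::finite \<Rightarrow> nat) \<Rightarrow> ('n \<Rightarrow> nat \<Rightarrow> 'n \<Rightarrow> real) \<Rightarrow> real \<Rightarrow> (real^'n) set" where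
  "infeasible_region K g s = nonneg_orthant - feasible_region K g s"

definition valid_system :: "('n::finite \<Rightarrow> nat) \<Rightarrow> ('n \<Rightarrow> nat \<Rightarrow> 'n \<Rightarrow> real) \<Rightarrow> real \<Rightarrow> bool" where
  "valid_system K g s \<longleftrightarrow> 0 < s \<and> (\<forall>i. 1 \<le> K i) \<and>
     (\<forall>i k j. k \<in> {1..K i} \<longrightarrow> 0 \<le> g i k j) \<and>
     (\<forall>i k. k \<in> {1..K i} \<longrightarrow> 0 < g i k i)"

definition ex_K :: "3 \<Rightarrow> nat" where "ex_K i = 2"

definition ex_gain :: "3 \<Rightarrow> nat \<Rightarrow> 3 \<Rightarrow> real" where
  "ex_gain i k j =
     (let v = (if i = 1 then (if k = 1 then (1, 0.5, 0.1) else (1, 0.1, 0.5))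
               else if i = 2 then (if k = 1 then (0.5, 1, 0.1) else (0.1, 1, 0.5))
               else (if k = 1 then (0.5, 0.1, 1) else (0.1, 0.5, 1)))
      in if j = 1 then fst v else if j = 2 then fst (snd v) else snd (snd v))"

end

theory Submission
  imports Defs
begin

(*
  For two transmitters the SINR of T_i is p_i / W_i(p_j), where W_i(y) is the largest of the
  affine functions (g_ij y + s) / g_ii over the receivers of T_i; its slope is a_i, the largest
  cross-to-direct gain ratio. Since W_i(y) > a_i y, every achieved SINR pair satisfies
  mu_1 mu_2 a_1 a_2 < 1. Conversely, if mu_1 mu_2 a_1 a_2 < 1, the map x |-> mu_1 W_1(mu_2 W_2(x))
  grows with slope less than one, so by the intermediate value theorem it has a fixed point,
  which yields a power vector achieving (mu_1, mu_2). The infeasible region is therefore the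
  part of the orthant above a hyperbola, which is convex.

  In the three-transmitter example, T_1 and T_2 (and likewise T_1 and T_3) see each other with
  gain 1/2 at one of their receivers, so SINR 2 cannot be reached simultaneously by both: the
  vectors (2,2,0) and (2,0,2) are infeasible. Their midpoint (2,1,1) is achieved by the powers
  (10 s, 20/3 s, 20/3 s).
*)

lemma Min_divide_image:
  fixes d :: "'a \<Rightarrow> real"
  assumes "finite S" "S \<noteq> {}" "0 \<le> x" "\<And>k. k \<in> S \<Longrightarrow> 0 < d k"
  shows "Min ((\<lambda>k. x / d k) ` S) = x / Max (d ` S)"
proof (rule Min_eqI)
  have "Max (d ` S) \<in> d ` S" using assms(1,2) by simp
  then show "x / Max (d ` S) \<in> (\<lambda>k. x / d k) ` S" by auto
  fix y assume "y \<in> (\<lambda>k. x / d k) ` S"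
  then obtain k where k: "k \<in> S" "y = x / d k" by auto
  have "d k \<le> Max (d ` S)" using k assms(1) by simp
  then show "x / Max (d ` S) \<le> y" using k assms by (simp add: divide_left_mono frac_le)
qed (use assms in simp)

lemma continuous_on_Max:
  fixes f :: "'a \<Rightarrow> 'b::topological_space \<Rightarrow> real"
  assumes "finite S" "S \<noteq> {}" "\<And>k. k \<in> S \<Longrightarrow> continuous_on T (f k)"
  shows "continuous_on T (\<lambda>y. Max ((\<lambda>k. f k y) ` S))"
  using assms
proof (induction S rule: finite_ne_induct)
  case (insert x F)
  then have "continuous_on T (\<lambda>y. max (f x y) (Max ((\<lambda>k. f k y) ` F)))"
    by (intro continuous_on_max) auto
  with insert.hyps show ?case by simp
qed simp

lemma convex_combination_mult_ge:
  fixes x1 x2 y1 y2 u v C :: real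
  assumes "0 \<le> x1" "0 \<le> x2" "0 \<le> y1" "0 \<le> y2" "0 \<le> C" "C \<le> x1 * x2" "C \<le> y1 * y2"
    and "0 \<le> u" "0 \<le> v" "u + v = 1"
  shows "C \<le> (u * x1 + v * y1) * (u * x2 + v * y2)"
proof -
  have "(x1 * y2 + x2 * y1)\<^sup>2 - 4 * ((x1 * x2) * (y1 * y2)) = (x1 * y2 - x2 * y1)\<^sup>2"
    by (simp add: power2_eq_square algebra_simps)
  then have "4 * ((x1 * x2) * (y1 * y2)) \<le> (x1 * y2 + x2 * y1)\<^sup>2"
    using zero_le_power2[of "x1 * y2 - x2 * y1"] by linarith
  moreover have "C * C \<le> (x1 * x2) * (y1 * y2)"
    using assms by (intro mult_mono) auto
  ultimately have "(2 * C)\<^sup>2 \<le> (x1 * y2 + x2 * y1)\<^sup>2"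
    by (simp add: power2_eq_square)
  then have cross: "2 * C \<le> x1 * y2 + x2 * y1"
    by (rule power2_le_imp_le) (use assms in simp)
  have "u * u * C + v * v * C + u * v * (2 * C) = C * ((u + v) * (u + v))"
    by (simp add: algebra_simps)
  then have "C = u * u * C + v * v * C + u * v * (2 * C)"
    using assms(10) by simp
  also have "\<dots> \<le> u * u * (x1 * x2) + v * v * (y1 * y2) + u * v * (x1 * y2 + x2 * y1)"
    using assms cross by (intro add_mono mult_left_mono) auto
  also have "\<dots> = (u * x1 + v * y1) * (u * x2 + v * y2)"
    by (simp add: algebra_simps)
  finally show ?thesis .
qed

lemma convex_product_superlevel_set:
  assumes "0 \<le> C"
  shows "convex {\<mu>::real^2. 0 \<le> \<mu>$1 \<and> 0 \<le> \<mu>$2 \<and> C \<le> \<mu>$1 * \<mu>$2}"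
  unfolding convex_def
  using convex_combination_mult_ge[OF _ _ _ _ assms] by simp

definition worst_interference ::
    "('n::finite \<Rightarrow> nat) \<Rightarrow> ('n \<Rightarrow> nat \<Rightarrow> 'n \<Rightarrow> real) \<Rightarrow> real \<Rightarrow> 'n \<Rightarrow> 'n \<Rightarrow> real \<Rightarrow> real" where
  "worst_interference K g s i j y = Max ((\<lambda>k. (g i k j * y + s) / g i k i) ` {1..K i})"

lemma worst_interference_ge:
  assumes "k \<in> {1..K i}"
  shows "g i k j / g i k i * y + s / g i k i \<le> worst_interference K g s i j y"
proof -
  have "(g i k j * y + s) / g i k i \<le> worst_interference K g s i j y"
    unfolding worst_interference_def using assms by (intro Max_ge) auto
  then show ?thesis by (simp add: add_divide_distrib)
qed

lemma worst_interference_pos: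
  assumes "valid_system K g s" "0 \<le> y"
  shows "0 < worst_interference K g s i j y"
proof -
  have k: "1 \<in> {1..K i}" and "0 < g i 1 i" "0 \<le> g i 1 j" "0 < s"
    using assms(1) unfolding valid_system_def by auto
  then have "0 < g i 1 j / g i 1 i * y + s / g i 1 i"
    using assms(2) by (simp add: add_nonneg_pos)
  also have "\<dots> \<le> worst_interference K g s i j y" using k by (rule worst_interference_ge)
  finally show ?thesis .
qed

lemma worst_interference_le:
  assumes "1 \<le> K i" "\<forall>k\<in>{1..K i}. g i k j / g i k i \<le> a" "0 \<le> y"
  shows "worst_interference K g s i j y \<le> a * y + Max ((\<lambda>k. s / g i k i) ` {1..K i})"
  unfolding worst_interference_def
proof (rule Max.boundedI)
  fix d assume "d \<in> (\<lambda>k. (g i k j * y + s) / g i k i) ` {1..K i}"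
  then obtain k where k: "k \<in> {1..K i}" and d: "d = (g i k j * y + s) / g i k i" by blast
  have "g i k j / g i k i * y \<le> a * y" using assms(2,3) k by (intro mult_right_mono) auto
  moreover have "s / g i k i \<le> Max ((\<lambda>k. s / g i k i) ` {1..K i})"
    using k by (intro Max_ge) auto
  ultimately show "d \<le> a * y + Max ((\<lambda>k. s / g i k i) ` {1..K i})"
    unfolding d by (simp add: add_divide_distrib)
qed (use assms(1) in auto)

lemma continuous_worst_interference:
  assumes "valid_system K g s"
  shows "continuous_on UNIV (worst_interference K g s i j)"
  unfolding worst_interference_def
proof (rule continuous_on_Max)
  fix k assume "k \<in> {1..K i}"
  then have "g i k i \<noteq> 0" using assms unfolding valid_system_def by force
  then show "continuous_on UNIV (\<lambda>y. (g i k j * y + s) / g i k i)"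
    by (intro continuous_intros) auto
qed (use assms in \<open>auto simp: valid_system_def\<close>)

lemma sinr_two_transmitters:
  fixes K :: "2 \<Rightarrow> nat" and p :: "real^2"
  assumes vs: "valid_system K g s" and p: "p \<in> nonneg_orthant" and "j \<noteq> i"
  shows "sinr K g s p i = p$i / worst_interference K g s i j (p$j)"
proof -
  have other: "UNIV - {i} = {j}" using \<open>j \<noteq> i\<close> exhaust_2[of i] exhaust_2[of j] by (auto simp: UNIV_2)
  have p0: "0 \<le> p$i" "0 \<le> p$j" using p unfolding nonneg_orthant_def by auto
  have "sinr_k g s p i k = p$i / ((g i k j * p$j + s) / g i k i)" if "k \<in> {1..K i}" for k
    using vs that unfolding sinr_k_def other valid_system_def by (auto simp: ac_simps)
  then have "sinr K g s p i = Min ((\<lambda>k. p$i / ((g i k j * p$j + s) / g i k i)) ` {1..K i})"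
    unfolding sinr_def by (metis (no_types, lifting) image_cong)
  also have "\<dots> = p$i / worst_interference K g s i j (p$j)"
    unfolding worst_interference_def
  proof (rule Min_divide_image)
    fix k assume k: "k \<in> {1..K i}"
    then have "0 \<le> g i k j * p$j" using vs p0 unfolding valid_system_def by simp
    then show "0 < (g i k j * p$j + s) / g i k i" using vs k unfolding valid_system_def by simp
  qed (use vs p0 in \<open>auto simp: valid_system_def\<close>)
  finally show ?thesis .
qed

lemma Gamma_two_transmitters:
  fixes K :: "2 \<Rightarrow> nat" and p :: "real^2"
  assumes "valid_system K g s" "p \<in> nonneg_orthant"
  shows "Gamma K g s p =
    vector [p$1 / worst_interference K g s 1 2 (p$2), p$2 / worst_interference K g s 2 1 (p$1)]"
  unfolding Gamma_def vec_eq_iff forall_2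
  using sinr_two_transmitters[OF assms, where i = 1 and j = 2]
    sinr_two_transmitters[OF assms, where i = 2 and j = 1] by simp

lemma ratio_product_lt_one:
  fixes f1 f2 :: "real \<Rightarrow> real"
  assumes f1: "\<And>y. 0 \<le> y \<Longrightarrow> a1 * y + b1 \<le> f1 y" and f2: "\<And>y. 0 \<le> y \<Longrightarrow> a2 * y + b2 \<le> f2 y"
    and "0 \<le> a1" "0 \<le> a2" "0 < b1" "0 < b2" "0 \<le> x1" "0 \<le> x2"
  shows "x1 / f1 x2 * (x2 / f2 x1) * (a1 * a2) < 1"
proof -
  have lb: "a1 * x2 + b1 \<le> f1 x2" "a2 * x1 + b2 \<le> f2 x1" using f1 f2 assms by simp_all
  have lb_pos: "0 < a1 * x2 + b1" "0 < a2 * x1 + b2" using assms by (simp_all add: add_nonneg_pos)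
  have "(a1 * x2 + b1) * (a2 * x1 + b2) = a1 * a2 * (x1 * x2) + (a1 * x2 * b2 + b1 * a2 * x1) + b1 * b2"
    by (simp add: algebra_simps)
  moreover have "0 \<le> a1 * x2 * b2 + b1 * a2 * x1" "0 < b1 * b2" using assms by simp_all
  ultimately have "a1 * a2 * (x1 * x2) < (a1 * x2 + b1) * (a2 * x1 + b2)" by linarith
  also have "\<dots> \<le> f1 x2 * f2 x1"
    using lb lb_pos by (intro mult_mono) auto
  finally have "a1 * a2 * (x1 * x2) < f1 x2 * f2 x1" .
  moreover have "0 < f1 x2" "0 < f2 x1" using lb lb_pos by simp_all
  ultimately show ?thesis by (simp add: field_simps)
qed

lemma ratio_fixed_point:
  fixes f1 f2 :: "real \<Rightarrow> real"
  assumes cont: "continuous_on UNIV f1" "continuous_on UNIV f2"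
    and pos: "\<And>y. 0 \<le> y \<Longrightarrow> 0 < f1 y" "\<And>y. 0 \<le> y \<Longrightarrow> 0 < f2 y"
    and le1: "\<And>y. 0 \<le> y \<Longrightarrow> f1 y \<le> a1 * y + c1" and le2: "\<And>y. 0 \<le> y \<Longrightarrow> f2 y \<le> a2 * y + c2"
    and "0 \<le> a1" "0 \<le> a2" "0 \<le> \<mu>1" "0 \<le> \<mu>2" and r: "\<mu>1 * \<mu>2 * (a1 * a2) < 1"
  obtains x1 x2 where "0 \<le> x1" "0 \<le> x2" "x1 / f1 x2 = \<mu>1" "x2 / f2 x1 = \<mu>2"
proof -
  define h where "h x = \<mu>1 * f1 (\<mu>2 * f2 x)" for x
  define r where "r = \<mu>1 * \<mu>2 * (a1 * a2)"
  define D where "D = \<mu>1 * (a1 * \<mu>2 * c2 + c1)"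
  define X where "X = D / (1 - r) + 1"
  \<comment> \<open>h grows at most with slope r < 1, so h X \<le> X far enough out; h 0 \<ge> 0 gives the IVT bracket\<close>
  have r1: "r < 1" unfolding r_def by (fact r)
  have "0 < c1" using pos(1)[of 0] le1[of 0] by simp
  moreover have "0 < c2" using pos(2)[of 0] le2[of 0] by simp
  ultimately have "0 \<le> D" unfolding D_def using assms by simp
  then have X0: "0 \<le> X" unfolding X_def using r1 by simp
  have "0 \<le> \<mu>2 * f2 X" using assms pos(2)[OF X0] by simp
  then have "h X \<le> \<mu>1 * (a1 * (\<mu>2 * f2 X) + c1)"
    unfolding h_def using le1 assms by (intro mult_left_mono) auto
  also have "\<dots> \<le> \<mu>1 * (a1 * (\<mu>2 * (a2 * X + c2)) + c1)"
    using le2[OF X0] assms by (intro mult_left_mono add_right_mono) auto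
  also have "\<dots> = r * X + D" unfolding r_def D_def by (simp add: algebra_simps)
  also have "\<dots> = X - (1 - r)" unfolding X_def using r1 by (simp add: field_simps)
  finally have "0 \<le> X - h X" using r1 by simp
  moreover have "0 - h 0 \<le> 0" unfolding h_def using assms pos by (simp add: less_imp_le)
  moreover have "continuous_on {0..X} (\<lambda>x. x - h x)"
  proof -
    have "continuous_on UNIV (\<lambda>x. \<mu>2 * f2 x)" using cont(2) by (auto intro!: continuous_intros)
    then have "continuous_on UNIV (\<lambda>x. f1 (\<mu>2 * f2 x))"
      by (rule continuous_on_compose2[OF cont(1)]) auto
    then have "continuous_on UNIV h" unfolding h_def by (auto intro!: continuous_intros)
    then show ?thesis by (intro continuous_intros) (rule continuous_on_subset, auto)
  qed
  ultimately obtain x where x: "0 \<le> x" "x - h x = 0"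
    using IVT'[of "\<lambda>x. x - h x" 0 0 X] X0 by auto
  have y: "0 \<le> \<mu>2 * f2 x" using assms pos(2)[OF x(1)] by simp
  have "x = \<mu>1 * f1 (\<mu>2 * f2 x)" using x(2) unfolding h_def by simp
  then have "x / f1 (\<mu>2 * f2 x) = \<mu>1"
    using pos(1)[OF y] by (metis nonzero_mult_div_cancel_right less_irrefl)
  moreover have "\<mu>2 * f2 x / f2 x = \<mu>2" using pos(2)[OF x(1)] by simp
  ultimately show ?thesis using that x(1) y by blast
qed

lemma feasible_two_transmitters_product_lt:
  fixes K :: "2 \<Rightarrow> nat"
  assumes vs: "valid_system K g s" and k1: "k1 \<in> {1..K 1}" and k2: "k2 \<in> {1..K 2}"
    and "\<mu> \<in> feasible_region K g s"
  shows "0 \<le> \<mu>$1 \<and> 0 \<le> \<mu>$2 \<and> \<mu>$1 * \<mu>$2 * (g 1 k1 2 / g 1 k1 1 * (g 2 k2 1 / g 2 k2 2)) < 1"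
proof -
  define W1 where "W1 = worst_interference K g s 1 2"
  define W2 where "W2 = worst_interference K g s 2 1"
  define a1 where "a1 = g 1 k1 2 / g 1 k1 1"
  define a2 where "a2 = g 2 k2 1 / g 2 k2 2"
  obtain p where p: "p \<in> nonneg_orthant" and "Gamma K g s p = \<mu>"
    using assms(4) unfolding feasible_region_def by auto
  then have \<mu>: "\<mu>$1 = p$1 / W1 (p$2)" "\<mu>$2 = p$2 / W2 (p$1)"
    using Gamma_two_transmitters[OF vs p] unfolding W1_def W2_def by auto
  have p0: "0 \<le> p$1" "0 \<le> p$2" using p unfolding nonneg_orthant_def by auto
  have "0 < W1 (p$2)" "0 < W2 (p$1)"
    unfolding W1_def W2_def using worst_interference_pos[OF vs] p0 by simp_all
  then have nonneg: "0 \<le> \<mu>$1" "0 \<le> \<mu>$2" unfolding \<mu> using p0 by simp_all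
  have "0 < g 1 k1 1" "0 < g 2 k2 2" "0 \<le> g 1 k1 2" "0 \<le> g 2 k2 1" "0 < s"
    using vs k1 k2 unfolding valid_system_def by auto
  then have ab: "0 \<le> a1" "0 \<le> a2" "0 < s / g 1 k1 1" "0 < s / g 2 k2 2"
    unfolding a1_def a2_def by simp_all
  have ge1: "a1 * y + s / g 1 k1 1 \<le> W1 y" for y
    unfolding W1_def a1_def using k1 by (rule worst_interference_ge)
  have ge2: "a2 * y + s / g 2 k2 2 \<le> W2 y" for y
    unfolding W2_def a2_def using k2 by (rule worst_interference_ge)
  have "\<mu>$1 * \<mu>$2 * (a1 * a2) < 1"
    unfolding \<mu> using ratio_product_lt_one[of a1 "s / g 1 k1 1" W1 a2 "s / g 2 k2 2" W2] ge1 ge2 ab p0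
    by blast
  with nonneg show ?thesis unfolding a1_def a2_def by simp
qed

lemma feasible_two_transmitters_if_product_lt:
  fixes K :: "2 \<Rightarrow> nat"
  assumes vs: "valid_system K g s"
    and k1: "k1 \<in> {1..K 1}" and m1: "\<forall>k\<in>{1..K 1}. g 1 k 2 / g 1 k 1 \<le> g 1 k1 2 / g 1 k1 1"
    and k2: "k2 \<in> {1..K 2}" and m2: "\<forall>k\<in>{1..K 2}. g 2 k 1 / g 2 k 2 \<le> g 2 k2 1 / g 2 k2 2"
    and \<mu>: "0 \<le> \<mu>$1" "0 \<le> \<mu>$2" "\<mu>$1 * \<mu>$2 * (g 1 k1 2 / g 1 k1 1 * (g 2 k2 1 / g 2 k2 2)) < 1"
  shows "\<mu> \<in> feasible_region K g s"
proof -
  define W1 where "W1 = worst_interference K g s 1 2"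
  define W2 where "W2 = worst_interference K g s 2 1"
  define c1 where "c1 = Max ((\<lambda>k. s / g 1 k 1) ` {1..K 1})"
  define c2 where "c2 = Max ((\<lambda>k. s / g 2 k 2) ` {1..K 2})"
  have le1: "W1 y \<le> g 1 k1 2 / g 1 k1 1 * y + c1" if "0 \<le> y" for y
    unfolding W1_def c1_def using k1 m1 that by (intro worst_interference_le) auto
  have le2: "W2 y \<le> g 2 k2 1 / g 2 k2 2 * y + c2" if "0 \<le> y" for y
    unfolding W2_def c2_def using k2 m2 that by (intro worst_interference_le) auto
  have pos1: "0 < W1 y" and pos2: "0 < W2 y" if "0 \<le> y" for y
    unfolding W1_def W2_def using worst_interference_pos[OF vs that] by simp_all
  have "continuous_on UNIV W1" "continuous_on UNIV W2"
    unfolding W1_def W2_def using vs by (simp_all add: continuous_worst_interference)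
  moreover have "0 \<le> g 1 k1 2 / g 1 k1 1" "0 \<le> g 2 k2 1 / g 2 k2 2"
    using vs k1 k2 unfolding valid_system_def by auto
  ultimately obtain x1 x2 where x: "0 \<le> x1" "0 \<le> x2" "x1 / W1 x2 = \<mu>$1" "x2 / W2 x1 = \<mu>$2"
    using ratio_fixed_point[of W1 W2, OF _ _ pos1 pos2 le1 le2 _ _ \<mu>] by blast
  define p :: "real^2" where "p = vector [x1, x2]"
  have p: "p \<in> nonneg_orthant" using x unfolding p_def nonneg_orthant_def forall_2 by simp
  then have "Gamma K g s p = \<mu>"
    using Gamma_two_transmitters[OF vs p] x unfolding p_def W1_def W2_def vec_eq_iff forall_2 by simp
  with p show ?thesis unfolding feasible_region_def by blast
qed

lemma two_transmitter_regions:
  fixes K :: "2 \<Rightarrow> nat"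
  assumes vs: "valid_system K g s"
    and cross: "\<forall>i k j. k \<in> {1..K i} \<longrightarrow> j \<noteq> i \<longrightarrow> 0 < g i k j"
    and k1: "k1 \<in> {1..K 1}" and m1: "\<forall>k\<in>{1..K 1}. g 1 k 2 / g 1 k 1 \<le> g 1 k1 2 / g 1 k1 1"
    and k2: "k2 \<in> {1..K 2}" and m2: "\<forall>k\<in>{1..K 2}. g 2 k 1 / g 2 k 2 \<le> g 2 k2 1 / g 2 k2 2"
  shows "convex (infeasible_region K g s) \<and>
    feasible_region K g s =
      {\<mu>. 0 \<le> \<mu>$1 \<and> 0 \<le> \<mu>$2 \<and> \<mu>$1 * \<mu>$2 < (g 1 k1 1 / g 1 k1 2) * (g 2 k2 2 / g 2 k2 1)}"
proof -
  define C where "C = (g 1 k1 1 / g 1 k1 2) * (g 2 k2 2 / g 2 k2 1)"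
  have "0 < g 1 k1 2" "0 < g 2 k2 1" using cross k1 k2 by (simp_all add: Ball_def)
  moreover have "0 < g 1 k1 1" "0 < g 2 k2 2" using vs k1 k2 unfolding valid_system_def by auto
  ultimately have C: "0 < C" "g 1 k1 2 / g 1 k1 1 * (g 2 k2 1 / g 2 k2 2) = 1 / C"
    unfolding C_def by simp_all
  have feasible: "feasible_region K g s = {\<mu>. 0 \<le> \<mu>$1 \<and> 0 \<le> \<mu>$2 \<and> \<mu>$1 * \<mu>$2 < C}"
  proof -
    have "x * (1 / C) < 1 \<longleftrightarrow> x < C" for x using C(1) by (simp add: field_simps)
    then show ?thesis
      using feasible_two_transmitters_product_lt[OF vs k1 k2]
        feasible_two_transmitters_if_product_lt[OF vs k1 m1 k2 m2] unfolding C(2) by blast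
  qed
  then have "infeasible_region K g s = {\<mu>. 0 \<le> \<mu>$1 \<and> 0 \<le> \<mu>$2 \<and> C \<le> \<mu>$1 * \<mu>$2}"
  proof -
    have "nonneg_orthant = {\<mu>::real^2. 0 \<le> \<mu>$1 \<and> 0 \<le> \<mu>$2}"
      unfolding nonneg_orthant_def forall_2 ..
    then show ?thesis unfolding infeasible_region_def feasible by (auto simp: not_less)
  qed
  then have "convex (infeasible_region K g s)"
    using convex_product_superlevel_set[of C] C(1) by simp
  with feasible show ?thesis unfolding C_def by blast
qed

lemma ex_sinr_k:
  "sinr_k ex_gain s p 1 1 = p$1 / (1/2 * p$2 + 1/10 * p$3 + s)"
  "sinr_k ex_gain s p 1 2 = p$1 / (1/10 * p$2 + 1/2 * p$3 + s)"
  "sinr_k ex_gain s p 2 1 = p$2 / (1/2 * p$1 + 1/10 * p$3 + s)"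
  "sinr_k ex_gain s p 2 2 = p$2 / (1/10 * p$1 + 1/2 * p$3 + s)"
  "sinr_k ex_gain s p 3 1 = p$3 / (1/2 * p$1 + 1/10 * p$2 + s)"
  "sinr_k ex_gain s p 3 2 = p$3 / (1/10 * p$1 + 1/2 * p$2 + s)"
  unfolding sinr_k_def ex_gain_def by (simp_all add: sum_diff1 sum_3 Let_def)

lemma ex_sinr: "sinr ex_K ex_gain s p i = min (sinr_k ex_gain s p i 1) (sinr_k ex_gain s p i 2)"
proof -
  have "{1..2::nat} = {1, 2}" by auto
  then show ?thesis unfolding sinr_def ex_K_def by simp
qed

lemma ex_feasible_not_both_ge_2:
  assumes s: "0 < s" and \<mu>: "\<mu> \<in> feasible_region ex_K ex_gain s"
  shows "\<not> (2 \<le> \<mu>$1 \<and> 2 \<le> \<mu>$2)" and "\<not> (2 \<le> \<mu>$1 \<and> 2 \<le> \<mu>$3)"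
proof -
  obtain p where p: "p \<in> nonneg_orthant" and "\<mu> = Gamma ex_K ex_gain s p"
    using \<mu> unfolding feasible_region_def by auto
  then have sinr: "\<mu>$i = min (sinr_k ex_gain s p i 1) (sinr_k ex_gain s p i 2)" for i
    unfolding Gamma_def ex_sinr by simp
  have p0: "0 \<le> p$1" "0 \<le> p$2" "0 \<le> p$3" using p unfolding nonneg_orthant_def by auto
  show "\<not> (2 \<le> \<mu>$1 \<and> 2 \<le> \<mu>$2)"
  proof
    assume "2 \<le> \<mu>$1 \<and> 2 \<le> \<mu>$2"
    then have "2 \<le> p$1 / (1/2 * p$2 + 1/10 * p$3 + s)" "2 \<le> p$2 / (1/2 * p$1 + 1/10 * p$3 + s)"
      unfolding sinr ex_sinr_k by simp_all
    then have "2 * (1/2 * p$2 + 1/10 * p$3 + s) \<le> p$1" "2 * (1/2 * p$1 + 1/10 * p$3 + s) \<le> p$2"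
      using p0 s by (simp_all add: pos_le_divide_eq)
    then show False using p0 s unfolding ring_distribs by linarith
  qed
  show "\<not> (2 \<le> \<mu>$1 \<and> 2 \<le> \<mu>$3)"
  proof
    assume "2 \<le> \<mu>$1 \<and> 2 \<le> \<mu>$3"
    then have "2 \<le> p$1 / (1/10 * p$2 + 1/2 * p$3 + s)" "2 \<le> p$3 / (1/2 * p$1 + 1/10 * p$2 + s)"
      unfolding sinr ex_sinr_k by simp_all
    then have "2 * (1/10 * p$2 + 1/2 * p$3 + s) \<le> p$1" "2 * (1/2 * p$1 + 1/10 * p$2 + s) \<le> p$3"
      using p0 s by (simp_all add: pos_le_divide_eq)
    then show False using p0 s unfolding ring_distribs by linarith
  qed
qed

lemma ex_infeasible_region_not_convex:
  assumes s: "0 < s"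
  shows "\<not> convex (infeasible_region ex_K ex_gain s)"
proof
  assume convex: "convex (infeasible_region ex_K ex_gain s)"
  define a :: "real^3" where "a = vector [2, 2, 0]"
  define b :: "real^3" where "b = vector [2, 0, 2]"
  have "a \<notin> feasible_region ex_K ex_gain s" "b \<notin> feasible_region ex_K ex_gain s"
    using ex_feasible_not_both_ge_2[OF s, of a] ex_feasible_not_both_ge_2[OF s, of b]
    unfolding a_def b_def by auto
  moreover have "a \<in> nonneg_orthant" "b \<in> nonneg_orthant"
    unfolding a_def b_def nonneg_orthant_def forall_3 by simp_all
  ultimately have "a \<in> infeasible_region ex_K ex_gain s" "b \<in> infeasible_region ex_K ex_gain s"
    unfolding infeasible_region_def by simp_all
  then have "(1/2) *\<^sub>R a + (1/2) *\<^sub>R b \<in> infeasible_region ex_K ex_gain s"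
    using convexD[OF convex] by simp
  moreover have "(1/2) *\<^sub>R a + (1/2) *\<^sub>R b = vector [2, 1, 1]"
    unfolding a_def b_def vec_eq_iff forall_3 by simp
  moreover
  define p :: "real^3" where "p = vector [10 * s, 20/3 * s, 20/3 * s]"
  have "Gamma ex_K ex_gain s p = vector [2, 1, 1]"
    unfolding vec_eq_iff forall_3 Gamma_def vec_lambda_beta ex_sinr ex_sinr_k p_def
    using s by (simp add: field_simps)
  moreover have "p \<in> nonneg_orthant" unfolding nonneg_orthant_def p_def forall_3 using s by simp
  ultimately show False unfolding infeasible_region_def feasible_region_def by (metis DiffD2 image_eqI)
qed

theorem theorem4:
  shows
  "(\<forall>(K :: 2 \<Rightarrow> nat) g s k1 k2.
      valid_system K g s \<longrightarrow>
      (\<forall>i k j. k \<in> {1..K i} \<longrightarrow> j \<noteq> i \<longrightarrow> 0 < g i k j) \<longrightarrow>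
      k1 \<in> {1..K 1} \<longrightarrow> (\<forall>k\<in>{1..K 1}. g 1 k 2 / g 1 k 1 \<le> g 1 k1 2 / g 1 k1 1) \<longrightarrow>
      k2 \<in> {1..K 2} \<longrightarrow> (\<forall>k\<in>{1..K 2}. g 2 k 1 / g 2 k 2 \<le> g 2 k2 1 / g 2 k2 2) \<longrightarrow>
      convex (infeasible_region K g s) \<and>
      feasible_region K g s =
        {\<mu>. 0 \<le> \<mu>$1 \<and> 0 \<le> \<mu>$2 \<and>
             \<mu>$1 * \<mu>$2 < (g 1 k1 1 / g 1 k1 2) * (g 2 k2 2 / g 2 k2 1)})
   \<and>
   (\<forall>s::real. 0 < s \<longrightarrow> \<not> convex (infeasible_region ex_K ex_gain s))"
  using two_transmitter_regions ex_infeasible_region_not_convex by blast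

end
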